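(* Let $S\subset\mathbb{Z}^d$ be a finite set containing the origin, $\mathcal{P}=\{P_\alpha\}_{\alpha\in S}$ a resolution of unity on $\mathbb{C}^D$ with $\operatorname{rank}P_0=1$, $\mu\in\mathbb{C}^D$ a unit vector and $C_\mu\phi=2\langle\phi,\mu\rangle\mu-\phi$. If $P_0\mu\neq0$, then $U(S,\mathcal{P},C_\mu)$ does not have the eigenvalue $-1$.
   Context: A resolution of unity: orthogonal projections $P_\alpha$ on $\mathbb{C}^D$, $P_\alpha P_\beta=0$ ($\alpha\neq\beta$), $\sum_\alpha P_\alpha=I$. $(\tau^\alpha f)(x)=f(x-\alpha)$ on $\ell^2(\mathbb{Z}^d,\mathbb{C}^D)$, $U(S,\mathcal{P},C)=\big(\sum_{\alpha\in S}\tau^\alpha P_\alpha\big)C$ with $C$ acting pointwise; eigenvalue means point spectrum. Inner products are linear in the first argument. *)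

theory Defs
  imports "HOL-Analysis.Analysis"
begin

text \<open>Vectors in C^D are complex^'n with D = CARD('n); lattice points in Z^d are int^'d.\<close>

definition cinner :: "complex^'n \<Rightarrow> complex^'n \<Rightarrow> complex" where
  "cinner u v = (\<Sum>i\<in>UNIV. u$i * cnj (v$i))"

definition cadjoint :: "complex^'n^'n \<Rightarrow> complex^'n^'n" where
  "cadjoint A = (\<chi> i j. cnj (A$j$i))"

definition orth_projection :: "complex^'n^'n \<Rightarrow> bool" where
  "orth_projection A \<longleftrightarrow> A ** A = A \<and> cadjoint A = A"

definition resolution_of_unity :: "'i set \<Rightarrow> ('i \<Rightarrow> complex^'n^'n) \<Rightarrow> bool" where
  "resolution_of_unity S P \<longleftrightarrow>
     (\<forall>\<alpha>\<in>S. orth_projection (P \<alpha>)) \<and>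
     (\<forall>\<alpha>\<in>S. \<forall>\<beta>\<in>S. \<alpha> \<noteq> \<beta> \<longrightarrow> P \<alpha> ** P \<beta> = 0) \<and>
     (\<Sum>\<alpha>\<in>S. P \<alpha>) = mat 1"

text \<open>The coin C_mu phi = 2 <phi,mu> mu - phi, as a matrix.\<close>
definition coin_mu :: "complex^'n \<Rightarrow> complex^'n^'n" where
  "coin_mu \<mu> = (\<chi> i j. 2 * \<mu>$i * cnj (\<mu>$j) - (if i = j then 1 else 0))"

definition ell2 :: "(int^'d \<Rightarrow> complex^'n) \<Rightarrow> bool" where
  "ell2 f \<longleftrightarrow> (\<lambda>x. (norm (f x))\<^sup>2) summable_on UNIV"

definition walk_U :: "(int^'d) set \<Rightarrow> (int^'d \<Rightarrow> complex^'n^'n) \<Rightarrow> complex^'n^'n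
      \<Rightarrow> (int^'d \<Rightarrow> complex^'n) \<Rightarrow> (int^'d \<Rightarrow> complex^'n)" where
  "walk_U S P C f = (\<lambda>x. \<Sum>\<alpha>\<in>S. P \<alpha> *v (C *v f (x - \<alpha>)))"

definition has_eigenvalue ::
  "((int^'d \<Rightarrow> complex^'n) \<Rightarrow> (int^'d \<Rightarrow> complex^'n)) \<Rightarrow> complex \<Rightarrow> bool" where
  "has_eigenvalue T c \<longleftrightarrow> (\<exists>f. ell2 f \<and> f \<noteq> (\<lambda>_. 0) \<and> T f = (\<lambda>x. c *s f x))"

end

theory Submission
  imports Defs
begin

text \<open>
  Suppose \<open>U f = -f\<close>. Applying \<open>P\<^sub>b\<close> to the eigenvalue equation at \<open>y + b\<close> isolates one summand:
  \<open>P\<^sub>b C f(y) = -P\<^sub>b f(y + b)\<close>. For \<open>b = 0\<close> the terms \<open>-P\<^sub>0 f(y)\<close> cancel and what remains is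
  \<open>2\<langle>f(y),\<mu>\<rangle> P\<^sub>0\<mu> = 0\<close>, so \<open>f(y) \<bottom> \<mu>\<close> and \<open>C f = -f\<close>. For \<open>b \<noteq> 0\<close> the relation then says that
  \<open>P\<^sub>b f\<close> is periodic with period \<open>b\<close>, hence zero by square summability. Thus \<open>f = P\<^sub>0 f\<close> takes
  values in the line \<open>ran P\<^sub>0 = \<complex> P\<^sub>0\<mu>\<close> and is orthogonal to \<mu>; as
  \<open>\<langle>P\<^sub>0\<mu>,\<mu>\<rangle> = \<parallel>P\<^sub>0\<mu>\<parallel>\<^sup>2 \<noteq> 0\<close>, this forces \<open>f = 0\<close>.
\<close>

lemma matrix_vector_mult_sum_left:
  "finite S \<Longrightarrow> (\<Sum>a\<in>S. A a) *v x = (\<Sum>a\<in>S. A a *v x)"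
  by (induction S rule: finite_induct) (auto simp: matrix_vector_mult_add_rdistrib)

lemma cinner_scale_left: "cinner (k *s u) v = k * cinner u v"
  by (simp add: cinner_def sum_distrib_left ac_simps)

lemma coin_mu_apply: "coin_mu \<mu> *v v = (2 * cinner v \<mu>) *s \<mu> - v"
proof -
  have "(\<Sum>j\<in>UNIV. v$j * (if i = j then 1 else 0)) = v$i" for i
    by (simp add: if_distrib[where f="\<lambda>z. _ * z"] cong: if_cong)
  then show ?thesis
    unfolding coin_mu_def cinner_def
    by (simp add: vec_eq_iff matrix_vector_mult_def right_diff_distrib sum_subtractf
        sum_distrib_left mult.commute mult.left_commute)
qed

lemma cinner_matrix_adjoint: "cinner (A *v u) v = cinner u (cadjoint A *v v)"
proof -
  have "cinner (A *v u) v = (\<Sum>i\<in>UNIV. \<Sum>j\<in>UNIV. A$i$j * u$j * cnj (v$i))"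
    unfolding cinner_def matrix_vector_mult_def by (simp add: sum_distrib_right)
  also have "\<dots> = (\<Sum>j\<in>UNIV. \<Sum>i\<in>UNIV. A$i$j * u$j * cnj (v$i))"
    by (rule sum.swap)
  also have "\<dots> = cinner u (cadjoint A *v v)"
    unfolding cinner_def cadjoint_def matrix_vector_mult_def
    by (simp add: sum_distrib_left mult.commute mult.left_commute)
  finally show ?thesis .
qed

lemma cinner_self_eq_0_iff: "cinner v v = 0 \<longleftrightarrow> v = 0"
proof -
  have "cinner v v = complex_of_real (\<Sum>i\<in>UNIV. (cmod (v$i))\<^sup>2)"
    unfolding cinner_def by (simp add: complex_mult_cnj cmod_def)
  then have "cinner v v = 0 \<longleftrightarrow> (\<Sum>i\<in>UNIV. (cmod (v$i))\<^sup>2) = 0"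
    by (metis of_real_eq_0_iff)
  also have "\<dots> \<longleftrightarrow> (\<forall>i. (cmod (v$i))\<^sup>2 = 0)"
    by (simp add: sum_nonneg_eq_0_iff)
  finally
  show ?thesis by (simp add: vec_eq_iff)
qed

lemma orth_projection_cinner:
  "orth_projection A \<Longrightarrow> cinner (A *v u) u = cinner (A *v u) (A *v u)"
  unfolding orth_projection_def by (metis cinner_matrix_adjoint matrix_vector_mul_assoc)

lemma rank_1_range_line:
  fixes A :: "complex^'n^'n"
  assumes "rank A = 1"
  obtains a where "\<And>x. \<exists>k. A *v x = k *s a"
proof -
  obtain B where B: "rows A \<subseteq> vec.span B" "card B = 1"
    using vec.basis_exists[of "rows A"] assms unfolding row_rank_def_gen by metis
  then obtain r where "B = {r}" by (meson card_1_singletonE)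
  with B have "\<forall>i. \<exists>k. A$i = k *s r"
    by (auto simp: rows_def row_def vec.span_singleton)
  then obtain c where c: "\<And>i. A$i = c i *s r" by metis
  have "A *v x = (\<Sum>j\<in>UNIV. r$j * x$j) *s (\<chi> i. c i)" for x
    by (simp add: vec_eq_iff matrix_vector_mult_def c sum_distrib_left ac_simps)
  then show thesis by (meson that)
qed

lemma rank_1_orth_projection_orthogonal_eq_0:
  assumes "orth_projection A" and "rank A = 1" and "A *v \<mu> \<noteq> 0"
    and "A *v v = v" and "cinner v \<mu> = 0"
  shows "v = 0"
proof -
  obtain a where line: "\<And>x. \<exists>k. A *v x = k *s a"
    using rank_1_range_line[OF assms(2)] by blast
  obtain k where k: "A *v \<mu> = k *s a" using line by blast
  obtain l where l: "v = l *s a" using line[of v] assms(4) by auto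
  have "cinner (A *v \<mu>) \<mu> \<noteq> 0"
    using assms(3) by (simp add: orth_projection_cinner[OF assms(1)] cinner_self_eq_0_iff)
  then have "cinner a \<mu> \<noteq> 0" by (simp add: k cinner_scale_left)
  with assms(5) have "l = 0" by (simp add: l cinner_scale_left)
  then show ?thesis by (simp add: l)
qed

lemma periodic_ell2_eq_0:
  fixes f :: "int^'d \<Rightarrow> complex^'n" and \<beta> :: "int^'d"
  assumes ell: "ell2 f" and "\<beta> \<noteq> 0"
    and per: "\<And>y. A *v f (y + \<beta>) = A *v f y"
  shows "A *v f y = 0"
proof -
  define h where "h k = y + (int k) *s \<beta>" for k :: nat
  have const: "A *v f (h k) = A *v f y" for k
  proof (induction k)
    case (Suc k)
    have "h (Suc k) = h k + \<beta>" by (simp add: h_def vec_eq_iff algebra_simps)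
    with Suc show ?case by (simp add: per)
  qed (simp add: h_def)
  obtain i where i: "\<beta>$i \<noteq> 0" using \<open>\<beta> \<noteq> 0\<close> by (metis vec_eq_iff zero_index)
  have "inj h"
  proof (rule injI)
    fix k m assume "h k = h m"
    then have "(h k)$i = (h m)$i" by simp
    then have "int k * \<beta>$i = int m * \<beta>$i" by (simp add: h_def)
    with i show "k = m" by simp
  qed
  have "(\<lambda>x. (norm (f x))\<^sup>2) summable_on range h"
    using ell unfolding ell2_def by (rule summable_on_subset_banach) auto
  then have "(\<lambda>k. (norm (f (h k)))\<^sup>2) summable_on UNIV"
    using summable_on_reindex[OF \<open>inj h\<close>[THEN inj_on_subset], of UNIV "\<lambda>x. (norm (f x))\<^sup>2"] by (simp add: o_def)
  then have "summable (\<lambda>k. (norm (f (h k)))\<^sup>2)" by (rule summable_on_imp_summable)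
  then have "(\<lambda>k. (norm (f (h k)))\<^sup>2) \<longlonglongrightarrow> 0" by (rule summable_LIMSEQ_zero)
  then have "(\<lambda>k. sqrt ((norm (f (h k)))\<^sup>2)) \<longlonglongrightarrow> sqrt 0" by (intro tendsto_intros)
  then have "(\<lambda>k. f (h k)) \<longlonglongrightarrow> 0" by (simp add: tendsto_norm_zero_iff)
  then have "(\<lambda>k. A *v f (h k)) \<longlonglongrightarrow> A *v 0"
    by (intro bounded_linear.tendsto[OF matrix_vector_mul_bounded_linear])
  then show ?thesis by (simp add: const LIMSEQ_const_iff)
qed

lemma resolution_of_unity_sum_apply:
  "resolution_of_unity S P \<Longrightarrow> finite S \<Longrightarrow> (\<Sum>a\<in>S. P a *v v) = v"
  unfolding resolution_of_unity_def by (simp add: matrix_vector_mult_sum_left[symmetric])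

lemma walk_U_eigen_projection:
  assumes "resolution_of_unity S P" and "finite S" and "b \<in> S"
    and eig: "walk_U S P C f = (\<lambda>x. c *s f x)"
  shows "P b *v (C *v f y) = c *s (P b *v f (y + b))"
proof -
  have proj: "P b ** P b = P b" and orth: "\<And>a. a \<in> S - {b} \<Longrightarrow> P b ** P a = 0"
    using assms(1,3) unfolding resolution_of_unity_def orth_projection_def by auto
  define w where "w a = C *v f (y + b - a)" for a
  have "(\<Sum>a\<in>S. P a *v w a) = c *s f (y + b)"
    using fun_cong[OF eig, of "y + b"] by (simp add: walk_U_def w_def)
  then have "c *s (P b *v f (y + b)) = P b *v (\<Sum>a\<in>S. P a *v w a)"
    by (simp add: vec.scale)
  also have "\<dots> = (\<Sum>a\<in>S. (P b ** P a) *v w a)"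
    by (simp add: vec.sum matrix_vector_mul_assoc)
  also have "\<dots> = (P b ** P b) *v w b"
    using assms(2,3) orth by (simp add: sum.remove)
  finally show ?thesis by (simp add: proj w_def)
qed

theorem theorem3p4:
  fixes S :: "(int^'d) set" and P :: "int^'d \<Rightarrow> complex^'n^'n" and \<mu> :: "complex^'n"
  assumes "finite S" and "0 \<in> S"
    and "resolution_of_unity S P"
    and "rank (P 0) = 1"
    and "norm \<mu> = 1"
    and "P 0 *v \<mu> \<noteq> 0"
  shows "\<not> has_eigenvalue (walk_U S P (coin_mu \<mu>)) (-1)"
proof
  assume "has_eigenvalue (walk_U S P (coin_mu \<mu>)) (-1)"
  then obtain f where ell: "ell2 f" and "f \<noteq> (\<lambda>_. 0)"
    and eig: "walk_U S P (coin_mu \<mu>) f = (\<lambda>x. (-1) *s f x)"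
    unfolding has_eigenvalue_def by blast
  have shift: "2 * cinner (f y) \<mu> *s (P b *v \<mu>) - P b *v f y = - (P b *v f (y + b))"
    if "b \<in> S" for b y
    using walk_U_eigen_projection[OF assms(3,1) that eig, of y]
    by (simp add: coin_mu_apply vec.diff vec.scale)
  have orthogonal: "cinner (f y) \<mu> = 0" for y
    using shift[OF assms(2), of y] assms(6) by simp
  have "P b *v f y = 0" if "b \<in> S" "b \<noteq> 0" for b y
  proof (rule periodic_ell2_eq_0[OF ell \<open>b \<noteq> 0\<close>])
    show "P b *v f (y + b) = P b *v f y" for y
      using shift[OF \<open>b \<in> S\<close>, of y] orthogonal by simp
  qed
  then have "(\<Sum>a\<in>S. P a *v f y) = P 0 *v f y" for y
    using assms(1,2) by (simp add: sum.remove)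
  then have "P 0 *v f y = f y" for y
    using resolution_of_unity_sum_apply[OF assms(3,1)] by simp
  moreover have "orth_projection (P 0)"
    using assms(2,3) unfolding resolution_of_unity_def by blast
  ultimately have "f y = 0" for y
    using rank_1_orth_projection_orthogonal_eq_0 assms(4,6) orthogonal by blast
  with \<open>f \<noteq> (\<lambda>_. 0)\<close> show False by auto
qed

end
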